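(* Let $d\ge 3$ be odd, $n=\frac{d^2+1}{2}$, and consider the $[[d^2+1,2,d]]$ generalized bicycle code defined by $a(x)=1+x$, $b(x)=1+x^d$. If all syndrome extractions are performed using the RL pattern, the effective distance of the code is $d$.
   Context: $R_n=\mathbb{F}_2[x]/\langle x^n-1\rangle$, vectors of $\mathbb{F}_2^{2n}$ are pairs $(u,v)$ of elements of $R_n$ (left half, right half), weight = number of nonzero coefficients. Code spaces: $C_2=\{(c(1+x),c(1+x^d))\}$ (X-stabilizers), $C_1=\{(u,v):u(1+x^d)+v(1+x)=0\}$, $C_2'=\{(c(1+x^{-d}),c(1+x^{-1}))\}$ (Z-stabilizers), $C_1'=\{(u,v):u(1+x^{-1})+v(1+x^{-d})=0\}$, $x^{-1}=x^{n-1}$; undetectable X- (resp. Z-) logical errors are elements of $C_1\setminus C_2$ (resp. $C_1'\setminus C_2'$). Each check $x^i(1+x,1+x^d)$ (left qubits $i,i+1$; right qubits $i,i+d$) and $x^i(1+x^{-d},1+x^{-1})$ is measured with one ancilla via four CNOTs. In the RL pattern the ancilla first interacts with the check's two right-half qubits and then with its two left-half qubits, so a single ancilla fault between the two halves propagates to errors of the check's type on its two left-half qubits, i.e. $(x^i(1+x),0)$ for X-checks and $(x^i(1+x^{-d}),0)$ for Z-checks; any other single ancilla fault is equivalent to at most one data-qubit error. The effective distance is the minimum number of faults producing an undetectable logical error, namely the minimum of $\mathrm{wt}(j)+\mathrm{wt}(u)+\mathrm{wt}(v)$ over $j,u,v\in R_n$ with $(u+j(x)(1+x),v)\in C_1\setminus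 C_2$ or $(u+j(x)(1+x^{-d}),v)\in C_1'\setminus C_2'$. *)

theory Defs
  imports "HOL-Library.Z2" "HOL-Computational_Algebra.Polynomial"
begin

text \<open>The ring R_n = F_2[x]/(x^n - 1): elements are represented by their canonical
  representatives, polynomials over F_2 (type bit) of degree < n; the ring product is
  the polynomial product reduced modulo x^n - 1.\<close>

definition cyc_mod :: "nat \<Rightarrow> bit poly" where
  "cyc_mod n = monom 1 n - 1"

definition Rn :: "nat \<Rightarrow> bit poly set" where
  "Rn n = {p. p mod cyc_mod n = p}"

definition rmul :: "nat \<Rightarrow> bit poly \<Rightarrow> bit poly \<Rightarrow> bit poly" where
  "rmul n p q = (p * q) mod cyc_mod n"

definition radd :: "nat \<Rightarrow> bit poly \<Rightarrow> bit poly \<Rightarrow> bit poly" where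
  "radd n p q = (p + q) mod cyc_mod n"

text \<open>x^k in R_n (exponent taken mod n, so x^{-k} = x^{n-k})\<close>
definition xpow :: "nat \<Rightarrow> nat \<Rightarrow> bit poly" where
  "xpow n k = monom 1 (k mod n)"

definition wt :: "bit poly \<Rightarrow> nat" where
  "wt p = card {i. coeff p i \<noteq> 0}"

text \<open>Code spaces (parameters n, d).  Here xinv_d = x^{-d} = x^{n-d}, xinv_1 = x^{-1} = x^{n-1}.\<close>
definition C2 :: "nat \<Rightarrow> nat \<Rightarrow> (bit poly \<times> bit poly) set" where
  "C2 n d = {(rmul n c (1 + xpow n 1), rmul n c (1 + xpow n d)) | c. c \<in> Rn n}"

definition C1 :: "nat \<Rightarrow> nat \<Rightarrow> (bit poly \<times> bit poly) set" where
  "C1 n d = {(u, v). u \<in> Rn n \<and> v \<in> Rn n \<and>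
     radd n (rmul n u (1 + xpow n d)) (rmul n v (1 + xpow n 1)) = 0}"

definition C2' :: "nat \<Rightarrow> nat \<Rightarrow> (bit poly \<times> bit poly) set" where
  "C2' n d = {(rmul n c (1 + xpow n (n - d mod n)), rmul n c (1 + xpow n (n - 1 mod n))) | c. c \<in> Rn n}"

definition C1' :: "nat \<Rightarrow> nat \<Rightarrow> (bit poly \<times> bit poly) set" where
  "C1' n d = {(u, v). u \<in> Rn n \<and> v \<in> Rn n \<and>
     radd n (rmul n u (1 + xpow n (n - 1 mod n))) (rmul n v (1 + xpow n (n - d mod n))) = 0}"

text \<open>Fault configurations producing an undetectable logical error under the RL pattern:
  j = hook (ancilla) faults, u, v = data-qubit errors.\<close>
definition bad_fault :: "nat \<Rightarrow> nat \<Rightarrow> bit poly \<Rightarrow> bit poly \<Rightarrow> bit poly \<Rightarrow> bool" where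
  "bad_fault n d j u v \<longleftrightarrow> j \<in> Rn n \<and> u \<in> Rn n \<and> v \<in> Rn n \<and>
     ((radd n u (rmul n j (1 + xpow n 1)), v) \<in> C1 n d - C2 n d \<or>
      (radd n u (rmul n j (1 + xpow n (n - d mod n))), v) \<in> C1' n d - C2' n d)"

definition eff_dist :: "nat \<Rightarrow> nat \<Rightarrow> nat" where
  "eff_dist n d = Inf {wt j + wt u + wt v | j u v. bad_fault n d j u v}"

end

theory Submission
  imports Defs
begin

text \<open>Read elements of \<open>R\<^sub>n\<close> as \<open>n\<close>-periodic sequences over \<open>\<int>\<close>, so that multiplication by \<open>x\<^sup>k\<close>
  becomes a shift. An X-type fault configuration is then given by periodic sequences \<open>A\<close> (data
  errors on the left), \<open>B\<close> (hook faults) and \<open>V\<close> (data errors on the right) such that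
  \<open>U = A + B + B(\<cdot> - 1)\<close> and \<open>V\<close> satisfy \<open>U(t) + U(t - d) + V(t) + V(t - 1) = 0\<close> without being a
  stabilizer. The cycle condition forces \<open>V = \<epsilon> + \<Sum>\<^sub>i\<^sub><\<^sub>d U(\<cdot> - i)\<close> for a constant \<open>\<epsilon>\<close>,
  and not being a stabilizer means that \<open>\<epsilon>\<close> or the period sum of \<open>U\<close> is nonzero. Writing
  \<open>d = 2M + 1\<close>, so that \<open>n = Md + M + 1\<close>, the sum of \<open>V\<close> along a progression of \<open>M\<close> or \<open>M + 1\<close>
  steps of length \<open>d\<close> differs by \<open>1\<close> from a window sum of \<open>U\<close> of length \<open>M + 1\<close> or \<open>M\<close>. Hence
  every shift of a fixed pattern of at most \<open>M + 1\<close> positions for each of \<open>A\<close> and \<open>V\<close> and two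
  for \<open>B\<close> meets a fault, and counting over the \<open>n\<close> shifts gives
  \<open>n \<le> (M + 1)(|A| + |B| + |V|)\<close>, i.e. at least \<open>d\<close> faults. Z-type faults reduce to X-type ones by
  the substitution \<open>t \<mapsto> 1 - d t\<close>, as \<open>d\<^sup>2 \<equiv> -1 (mod n)\<close>. Conversely, \<open>M\<close> spaced data errors on
  the left and \<open>M + 1\<close> consecutive ones on the right form an undetectable logical error.\<close>

text \<open>The library rewrites \<open>+\<close> and \<open>*\<close> on \<open>bit\<close> to XOR and AND, which blocks ring normalisation.\<close>

declare add_bit_eq_xor[simp del] mult_bit_eq_and[simp del]

lemma bit_add_self [simp]: "(x::bit) + x = 0"
  by (simp add: add_eq_0_iff)

lemma bit_add_eq_0_iff: "(x::bit) + y = 0 \<longleftrightarrow> x = y"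
  by (auto simp: add_eq_0_iff)

lemma bit_add_right_cancel: "(x::bit) + y + y = x"
  by (simp add: add.assoc)

lemma bit_sum_telescope: "(\<Sum>i<l. f (Suc i) + f i) = f l + (f 0 :: bit)"
  using sum_lessThan_telescope[of f l] by simp

lemma sum_lessThan_add_split:
  fixes m l :: nat
  shows "(\<Sum>k<m + l. f k) = (\<Sum>k<m. f k) + (\<Sum>k<l. f (m + k))"
  by (induction l) (simp_all add: add.assoc)

lemma sum_sum_list_swap:
  "(\<Sum>s\<in>S. \<Sum>x\<leftarrow>xs. g s x) = (\<Sum>x\<leftarrow>xs. \<Sum>s\<in>S. g s x)"
  by (induction xs) (simp_all add: sum.distrib)

section \<open>Periodic sequences\<close>

definition periodic :: "nat \<Rightarrow> (int \<Rightarrow> 'a) \<Rightarrow> bool" where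
  "periodic n f \<longleftrightarrow> (\<forall>t. f (t + int n) = f t)"

lemma periodic_add_mult:
  assumes "periodic n f"
  shows "f (t + k * int n) = f t"
proof (induction k rule: int_induct[where k = 0])
  case (step1 i)
  have "f (t + (i + 1) * int n) = f ((t + i * int n) + int n)"
    by (simp add: algebra_simps)
  with assms step1 show ?case
    unfolding periodic_def by simp
next
  case (step2 i)
  have "f (t + i * int n) = f ((t + (i - 1) * int n) + int n)"
    by (simp add: algebra_simps)
  with assms step2 show ?case
    unfolding periodic_def by simp
qed simp

lemma periodic_eqI:
  assumes "periodic n f" and "s = t + k * int n"
  shows "f s = f t"
  using periodic_add_mult[OF assms(1)] assms(2) by simp

lemma periodic_mod: "periodic n f \<Longrightarrow> f (t mod int n) = f t"
proof (rule periodic_eqI[where k = "- (t div int n)"])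
  show "t mod int n = t + - (t div int n) * int n"
    using div_mult_mod_eq[of t "int n"] by linarith
qed

lemma periodic_mod_eq: "periodic n f \<Longrightarrow> s mod int n = t mod int n \<Longrightarrow> f s = f t"
  by (metis periodic_mod)

lemma periodic_shift: "periodic n f \<Longrightarrow> periodic n (\<lambda>t. f (t - b))"
  unfolding periodic_def by (metis diff_add_eq)

lemma periodic_add: "periodic n f \<Longrightarrow> periodic n g \<Longrightarrow> periodic n (\<lambda>t. f t + g t)"
  by (simp add: periodic_def)

lemma periodic_comp: "periodic n f \<Longrightarrow> periodic n (\<lambda>t. h (f t))"
  by (simp add: periodic_def)

lemma periodic_affine:
  assumes "periodic n f"
  shows "periodic n (\<lambda>s. f (a * s + b))"
  unfolding periodic_def
proof
  fix s
  show "f (a * (s + int n) + b) = f (a * s + b)"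
    by (rule periodic_eqI[OF assms, where k = a]) (simp add: algebra_simps)
qed

lemma shift_invariant_eq_const:
  fixes W :: "int \<Rightarrow> 'a" and t :: int
  assumes "\<And>t. W t = W (t - 1)"
  shows "W t = W 0"
proof (induction t rule: int_induct[where k = 0])
  case (step1 i)
  then show ?case using assms[of "i + 1"] by simp
next
  case (step2 i)
  then show ?case using assms[of i] by simp
qed simp

lemma periodic_sum_affine:
  fixes g :: "int \<Rightarrow> 'a::comm_monoid_add"
  assumes "coprime a (int n)" and "periodic n g"
  shows "(\<Sum>s<n. g (a * int s + b)) = (\<Sum>s<n. g (int s))"
proof -
  define h where "h s = nat ((a * int s + b) mod int n)" for s
  have "inj_on h {..<n}"
  proof (rule inj_onI)
    fix x y assume "x \<in> {..<n}" "y \<in> {..<n}" "h x = h y"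
    then have "(a * int x + b) mod int n = (a * int y + b) mod int n"
      by (simp add: h_def nat_eq_iff2)
    then have "int n dvd a * (int x - int y)"
      by (simp add: mod_eq_dvd_iff algebra_simps)
    with assms(1) have "int n dvd int x - int y"
      by (simp add: coprime_dvd_mult_right_iff coprime_commute)
    with \<open>x \<in> {..<n}\<close> \<open>y \<in> {..<n}\<close> show "x = y"
      by (simp add: mod_eq_dvd_iff[symmetric])
  qed
  moreover have "h ` {..<n} \<subseteq> {..<n}"
    by (auto simp: h_def nat_less_iff)
  ultimately have "bij_betw h {..<n} {..<n}"
    by (simp add: bij_betw_def endo_inj_surj)
  then have "(\<Sum>s<n. g (int (h s))) = (\<Sum>s<n. g (int s))"
    by (rule sum.reindex_bij_betw)
  moreover have "g (int (h s)) = g (a * int s + b)" if "s < n" for s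
    using that periodic_mod[OF assms(2)] by (simp add: h_def)
  ultimately show ?thesis
    by simp
qed

lemma periodic_sum_shift:
  fixes g :: "int \<Rightarrow> 'a::comm_monoid_add"
  shows "periodic n g \<Longrightarrow> (\<Sum>s<n. g (int s + b)) = (\<Sum>s<n. g (int s))"
  using periodic_sum_affine[of 1 n g b] by simp

lemma periodic_sum_window:
  fixes U :: "int \<Rightarrow> 'a::comm_monoid_add"
  assumes "periodic n U"
  shows "(\<Sum>k<n + l. U (y + int k)) = (\<Sum>k<n. U (int k)) + (\<Sum>k<l. U (y + int k))"
proof -
  have "(\<Sum>k<n. U (y + int k)) = (\<Sum>k<n. U (int k))"
    using periodic_sum_shift[OF assms, of y] by (simp add: add.commute)
  moreover have "U (y + int (n + k)) = U (y + int k)" for k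
    by (rule periodic_eqI[OF assms, where k = 1]) simp
  ultimately show ?thesis
    by (simp add: sum_lessThan_add_split)
qed

lemma periodic_antidifference:
  fixes U :: "int \<Rightarrow> 'a::ab_group_add"
  assumes "n > 0" and "periodic n U" and "(\<Sum>k<n. U (int k)) = 0"
  obtains c where "periodic n c" and "\<And>t. U t = c t - c (t - 1)"
proof
  define c where "c t = (\<Sum>k\<le>nat (t mod int n). U (int k))" for t
  show "periodic n c"
    by (simp add: periodic_def c_def)
  show "U t = c t - c (t - 1)" for t
  proof (cases "t mod int n = 0")
    case True
    have "(t - 1) mod int n = (t mod int n - 1) mod int n"
      by (simp add: mod_diff_left_eq)
    also have "\<dots> = int (n - 1)"
      using True \<open>n > 0\<close> by (simp add: zmod_minus1 of_nat_diff)
    finally have "c (t - 1) = (\<Sum>k<Suc (n - 1). U (int k))"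
      by (simp only: c_def nat_int lessThan_Suc_atMost)
    then have "c (t - 1) = (\<Sum>k<n. U (int k))"
      using \<open>n > 0\<close> by simp
    with True show ?thesis
      using assms(3) periodic_mod[OF assms(2), of t] by (simp add: c_def)
  next
    case False
    have "0 \<le> t mod int n" "t mod int n < int n"
      using \<open>n > 0\<close> by simp_all
    with False have "0 < t mod int n"
      by linarith
    define r where "r = nat (t mod int n) - 1"
    have r: "t mod int n = int (Suc r)"
      using \<open>0 < t mod int n\<close> by (simp add: r_def)
    have "(t - 1) mod int n = (t mod int n - 1) mod int n"
      by (simp add: mod_diff_left_eq)
    then have "(t - 1) mod int n = int r"
      using r \<open>t mod int n < int n\<close> by simp
    then have "c (t - 1) = (\<Sum>k\<le>r. U (int k))"
      by (simp add: c_def)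
    moreover have "c t = (\<Sum>k\<le>Suc r. U (int k))"
      unfolding c_def r nat_int ..
    ultimately have "c t = c (t - 1) + U (int (Suc r))"
      by simp
    moreover have "U (int (Suc r)) = U t"
      using periodic_mod[OF assms(2), of t] r by simp
    ultimately show ?thesis
      by (simp add: algebra_simps)
  qed
qed

definition pweight :: "nat \<Rightarrow> (int \<Rightarrow> 'a::zero) \<Rightarrow> nat" where
  "pweight n f = card {s. s < n \<and> f (int s) \<noteq> 0}"

lemma pweight_eq_sum: "pweight n f = (\<Sum>s<n. of_bool (f (int s) \<noteq> 0))"
  by (simp add: pweight_def Int_def conj_commute lessThan_def)

lemma pweight_affine:
  assumes "coprime a (int n)" and "periodic n f"
  shows "pweight n (\<lambda>s. f (a * s + b)) = pweight n f"
  unfolding pweight_eq_sum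
  by (rule periodic_sum_affine[OF assms(1) periodic_comp[OF assms(2)]])

lemma pweight_cover:
  fixes xs :: "((int \<Rightarrow> 'a::comm_monoid_add) \<times> int) list"
  assumes "\<And>f b. (f, b) \<in> set xs \<Longrightarrow> periodic n f"
    and "\<And>s. (\<Sum>(f, b)\<leftarrow>xs. f (s + b)) \<noteq> 0"
  shows "n \<le> (\<Sum>(f, b)\<leftarrow>xs. pweight n f)"
proof -
  have "1 \<le> (\<Sum>(f, b)\<leftarrow>xs. of_bool (f (s + b) \<noteq> 0) :: nat)" for s
  proof (rule ccontr)
    assume "\<not> ?thesis"
    then have "(\<Sum>(f, b)\<leftarrow>xs. of_bool (f (s + b) \<noteq> 0) :: nat) = 0"
      by linarith
    then have "\<forall>(f, b)\<in>set xs. f (s + b) = 0"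
      by (fastforce simp: sum_list_eq_0_iff)
    then have "(\<Sum>(f, b)\<leftarrow>xs. f (s + b)) = 0"
      by (induction xs) auto
    with assms(2) show False
      by blast
  qed
  then have "(\<Sum>s<n. 1) \<le> (\<Sum>s<n. \<Sum>(f, b)\<leftarrow>xs. of_bool (f (int s + b) \<noteq> 0) :: nat)"
    by (intro sum_mono)
  then have "n \<le> (\<Sum>s<n. \<Sum>(f, b)\<leftarrow>xs. of_bool (f (int s + b) \<noteq> 0) :: nat)"
    by simp
  also have "\<dots> = (\<Sum>(f, b)\<leftarrow>xs. \<Sum>s<n. of_bool (f (int s + b) \<noteq> 0))"
    by (simp only: sum_sum_list_swap split_def)
  also have "\<dots> = (\<Sum>(f, b)\<leftarrow>xs. pweight n f)"
  proof (intro arg_cong[where f = sum_list] map_cong refl, clarify)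
    fix f b
    assume "(f, b) \<in> set xs"
    then show "(\<Sum>s<n. of_bool (f (int s + b) \<noteq> 0)) = pweight n f"
      unfolding pweight_eq_sum by (rule periodic_sum_shift[OF periodic_comp[OF assms(1)]])
  qed
  finally show ?thesis .
qed

section \<open>Weight of non-trivial periodic cycles\<close>

text \<open>The code with checks \<open>(1 + x\<^sup>a, 1 + x\<^sup>b)\<close> on periodic sequences: \<open>seq_cycle\<close> is the analogue
  of \<open>C1\<close>, \<open>seq_boundary\<close> that of \<open>C2\<close>.\<close>

definition seq_cycle :: "int \<Rightarrow> int \<Rightarrow> (int \<Rightarrow> bit) \<Rightarrow> (int \<Rightarrow> bit) \<Rightarrow> bool" where
  "seq_cycle a b U V \<longleftrightarrow> (\<forall>t. U t + U (t - a) + V t + V (t - b) = 0)"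

definition seq_boundary :: "nat \<Rightarrow> int \<Rightarrow> int \<Rightarrow> (int \<Rightarrow> bit) \<Rightarrow> (int \<Rightarrow> bit) \<Rightarrow> bool" where
  "seq_boundary n a b U V \<longleftrightarrow>
     (\<exists>c. periodic n c \<and> (\<forall>t. U t = c t + c (t - b) \<and> V t = c t + c (t - a)))"

lemma seq_cycle_cong:
  assumes "periodic n U" and "periodic n V"
    and "a mod int n = a' mod int n" and "b mod int n = b' mod int n"
  shows "seq_cycle a b U V \<longleftrightarrow> seq_cycle a' b' U V"
proof -
  have "U (t - a) = U (t - a')" "V (t - b) = V (t - b')" for t
    using periodic_mod_eq[OF assms(1) mod_diff_cong[OF refl assms(3)]]
      periodic_mod_eq[OF assms(2) mod_diff_cong[OF refl assms(4)]] by simp_all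
  then show ?thesis
    by (simp add: seq_cycle_def)
qed

lemma seq_boundary_cong:
  assumes "a mod int n = a' mod int n" and "b mod int n = b' mod int n"
  shows "seq_boundary n a b U V \<longleftrightarrow> seq_boundary n a' b' U V"
proof -
  have shift_eq: "c (t - a) = c (t - a')" "c (t - b) = c (t - b')" if "periodic n c" for c t
    using periodic_mod_eq[OF that mod_diff_cong[OF refl assms(1)]]
      periodic_mod_eq[OF that mod_diff_cong[OF refl assms(2)]] by simp_all
  have "(\<forall>t. U t = c t + c (t - b) \<and> V t = c t + c (t - a))
      \<longleftrightarrow> (\<forall>t. U t = c t + c (t - b') \<and> V t = c t + c (t - a'))" if "periodic n c" for c
    using shift_eq[OF that] by simp
  then show ?thesis
    unfolding seq_boundary_def by blast
qed

lemma seq_cycle_window_sum: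
  assumes "seq_cycle (int d) 1 U V"
  obtains \<epsilon> where "\<And>t. V t = \<epsilon> + (\<Sum>i<d. U (t - int i))"
proof -
  define W where "W t = V t + (\<Sum>i<d. U (t - int i))" for t
  have "W t = W (t - 1)" for t
  proof -
    have "(\<Sum>i<d. U (t - int i)) + (\<Sum>i<d. U (t - 1 - int i))
        = (\<Sum>i<d. U (t - int (Suc i)) + U (t - int i))"
      by (simp add: sum.distrib algebra_simps)
    also have "\<dots> = U (t - int d) + U t"
      using bit_sum_telescope[of "\<lambda>i. U (t - int i)" d] by simp
    finally have "W t + W (t - 1) = U t + U (t - int d) + V t + V (t - 1)"
      by (simp add: W_def algebra_simps)
    with assms show ?thesis
      by (simp add: seq_cycle_def bit_add_eq_0_iff)
  qed
  then have "W t = W 0" for t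
    by (rule shift_invariant_eq_const)
  show thesis
  proof (rule that)
    fix t
    have "V t = W t + (\<Sum>i<d. U (t - int i))"
      by (simp add: W_def add.assoc)
    with \<open>\<And>t. W t = W 0\<close> show "V t = W 0 + (\<Sum>i<d. U (t - int i))"
      by simp
  qed
qed

lemma sum_progression_window:
  fixes U V :: "int \<Rightarrow> 'a::comm_semiring_1"
  assumes V: "\<And>t. V t = \<epsilon> + (\<Sum>i<d. U (t - int i))"
  shows "(\<Sum>q<L. V (s + int q * int d)) = of_nat L * \<epsilon> + (\<Sum>k<L * d. U (s - int d + 1 + int k))"
proof (induction L)
  case (Suc L)
  have "(\<Sum>i<d. U (s + int L * int d - int i)) = (\<Sum>k<d. U (s - int d + 1 + int (L * d + k)))"
    by (subst sum.nat_diff_reindex[symmetric]) (intro sum.cong refl, simp add: of_nat_diff algebra_simps)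
  moreover have "Suc L * d = L * d + d"
    by simp
  ultimately show ?case
    using Suc by (simp only: sum.lessThan_Suc V sum_lessThan_add_split) (simp add: algebra_simps)
qed simp

lemma periodic_window_complement:
  fixes U :: "int \<Rightarrow> bit"
  assumes "periodic n U" and "m + l = n"
  shows "(\<Sum>k<m. U (y + int k)) = (\<Sum>k<n. U (int k)) + (\<Sum>k<l. U (y + int m + int k))"
proof -
  have "(\<Sum>k<n. U (int k)) = (\<Sum>k<n. U (y + int k))"
    using periodic_sum_shift[OF assms(1), of y] by (simp only: add.commute)
  also have "\<dots> = (\<Sum>k<m. U (y + int k)) + (\<Sum>k<l. U (y + int m + int k))"
    unfolding assms(2)[symmetric] sum_lessThan_add_split by (simp add: add.assoc)
  finally show ?thesis
    by (simp add: bit_add_right_cancel)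
qed

text \<open>Summing \<open>V\<close> along \<open>L\<close> steps of length \<open>d\<close> gives \<open>L \<epsilon>\<close> plus a window sum of \<open>U\<close> of length
  \<open>L d\<close>. Since \<open>M d = n - (M + 1)\<close> and \<open>(M + 1) d = n + M\<close>, that window is a full period sum
  \<open>P\<close> plus a window of length \<open>M + 1\<close> resp. \<open>M\<close>, and one of \<open>L = M, M + 1\<close> makes \<open>L \<epsilon> + P = 1\<close>.\<close>

lemma progression_window_identity:
  fixes U V :: "int \<Rightarrow> bit"
  assumes d: "d = 2 * M + 1" and n: "n = 2 * M * M + 2 * M + 1" and "periodic n U"
    and V: "\<And>t. V t = \<epsilon> + (\<Sum>i<d. U (t - int i))"
    and nontrivial: "\<epsilon> \<noteq> 0 \<or> (\<Sum>k<n. U (int k)) \<noteq> 0"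
  obtains L l e where "L \<le> M + 1" and "l \<le> M + 1"
    and "\<And>s. (\<Sum>q<L. V (s + int q * int d)) + (\<Sum>k<l. U (s + e + int k)) = 1"
proof -
  define P where "P = (\<Sum>k<n. U (int k))"
  have "of_nat M * \<epsilon> + P = 1 \<or> of_nat (M + 1) * \<epsilon> + P = 1"
    using nontrivial by (cases \<epsilon>; cases P) (auto simp: P_def algebra_simps)
  then show thesis
  proof
    assume M_case: "of_nat M * \<epsilon> + P = 1"
    show thesis
    proof (rule that[of M "M + 1" "int (M * d) - int d + 1"])
      fix s
      have "M * d + (M + 1) = n"
        using d n by (simp add: algebra_simps)
      from periodic_window_complement[OF \<open>periodic n U\<close> this, of "s - int d + 1"]
      have "(\<Sum>q<M. V (s + int q * int d))
          = of_nat M * \<epsilon> + P + (\<Sum>k<M + 1. U (s + (int (M * d) - int d + 1) + int k))"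
        by (simp add: sum_progression_window[OF V] P_def algebra_simps)
      with M_case show "(\<Sum>q<M. V (s + int q * int d))
          + (\<Sum>k<M + 1. U (s + (int (M * d) - int d + 1) + int k)) = 1"
        by (simp add: bit_add_right_cancel)
    qed simp_all
  next
    assume M1_case: "of_nat (M + 1) * \<epsilon> + P = 1"
    show thesis
    proof (rule that[of "M + 1" M "1 - int d"])
      fix s
      have "(M + 1) * d = n + M"
        using d n by (simp add: algebra_simps)
      with periodic_sum_window[OF \<open>periodic n U\<close>, of "s + (1 - int d)" M]
      have "(\<Sum>q<M + 1. V (s + int q * int d)) = of_nat (M + 1) * \<epsilon> + P + (\<Sum>k<M. U (s + (1 - int d) + int k))"
        by (simp add: sum_progression_window[OF V] P_def algebra_simps)
      with M1_case show "(\<Sum>q<M + 1. V (s + int q * int d)) + (\<Sum>k<M. U (s + (1 - int d) + int k)) = 1"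
        by (simp add: bit_add_right_cancel)
    qed simp_all
  qed
qed

lemma seq_cycle_window_nontrivial:
  fixes U V :: "int \<Rightarrow> bit"
  assumes "n > 0" and "periodic n U" and V: "\<And>t. V t = \<epsilon> + (\<Sum>i<d. U (t - int i))"
    and nonboundary: "\<not> seq_boundary n (int d) 1 U V"
  shows "\<epsilon> \<noteq> 0 \<or> (\<Sum>k<n. U (int k)) \<noteq> 0"
proof (rule ccontr)
  assume trivial: "\<not> ?thesis"
  then obtain c where "periodic n c" and U_c: "\<And>t. U t = c t - c (t - 1)"
    using periodic_antidifference[OF assms(1,2)] by auto
  have "V t = c t + c (t - int d)" for t
    using bit_sum_telescope[of "\<lambda>i. c (t - int i)" d] trivial by (simp add: V U_c algebra_simps)
  with \<open>periodic n c\<close> U_c have "seq_boundary n (int d) 1 U V"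
    unfolding seq_boundary_def by auto
  with nonboundary show False ..
qed

lemma hook_window_cover:
  fixes A B V :: "int \<Rightarrow> bit"
  assumes periodic: "periodic n A" "periodic n B" "periodic n V"
    and window: "\<And>s. (\<Sum>q<L. V (s + int q * D))
      + (\<Sum>k<l. A (s + e + int k) + B (s + e + int k) + B (s + e + int k - 1)) = 1"
  shows "n \<le> L * pweight n V + l * pweight n A + 2 * pweight n B"
proof -
  define xs where "xs = map (\<lambda>q. (V, int q * D)) [0..<L] @ map (\<lambda>k. (A, e + int k)) [0..<l]
    @ [(B, e + int l - 1), (B, e - 1)]"
  have "n \<le> (\<Sum>(f, b)\<leftarrow>xs. pweight n f)"
  proof (rule pweight_cover)
    show "periodic n f" if "(f, b) \<in> set xs" for f b
      using that periodic by (auto simp: xs_def)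
    show "(\<Sum>(f, b)\<leftarrow>xs. f (s + b)) \<noteq> 0" for s
    proof -
      have "(\<Sum>k<l. A (s + e + int k) + B (s + e + int k) + B (s + e + int k - 1))
          = (\<Sum>k<l. A (s + e + int k)) + B (s + e + int l - 1) + B (s + e - 1)"
        using bit_sum_telescope[of "\<lambda>k. B (s + e + int k - 1)" l]
        by (simp add: sum.distrib algebra_simps)
      then show ?thesis
        using window[of s] by (simp add: xs_def interv_sum_list_conv_sum_set_nat atLeast0LessThan algebra_simps)
    qed
  qed
  then show ?thesis
    by (simp add: xs_def interv_sum_list_conv_sum_set_nat atLeast0LessThan)
qed

lemma nonboundary_weight_bound:
  fixes A B V :: "int \<Rightarrow> bit"
  defines "U \<equiv> \<lambda>t. A t + B t + B (t - 1)"
  assumes d: "d = 2 * M + 1" and n: "n = 2 * M * M + 2 * M + 1" and "M \<ge> 1"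
    and periodic: "periodic n A" "periodic n B" "periodic n V"
    and cycle: "seq_cycle (int d) 1 U V" and nonboundary: "\<not> seq_boundary n (int d) 1 U V"
  shows "d \<le> pweight n A + pweight n B + pweight n V"
proof -
  have "periodic n U"
    unfolding U_def by (intro periodic_add periodic periodic_shift)
  obtain \<epsilon> where V: "\<And>t. V t = \<epsilon> + (\<Sum>i<d. U (t - int i))"
    using seq_cycle_window_sum[OF cycle] by blast
  have "\<epsilon> \<noteq> 0 \<or> (\<Sum>k<n. U (int k)) \<noteq> 0"
    using seq_cycle_window_nontrivial[OF _ \<open>periodic n U\<close> V nonboundary] n by simp
  then obtain L l e where "L \<le> M + 1" and "l \<le> M + 1"
    and window: "\<And>s. (\<Sum>q<L. V (s + int q * int d)) + (\<Sum>k<l. U (s + e + int k)) = 1"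
    using progression_window_identity[OF d n \<open>periodic n U\<close> V] by blast
  have "n \<le> L * pweight n V + l * pweight n A + 2 * pweight n B"
    using window by (intro hook_window_cover[OF periodic]) (simp add: U_def add_diff_eq)
  also have "\<dots> \<le> (M + 1) * (pweight n A + pweight n B + pweight n V)"
    unfolding distrib_left
    using mult_le_mono1[OF \<open>L \<le> M + 1\<close>, of "pweight n V"] mult_le_mono1[OF \<open>l \<le> M + 1\<close>, of "pweight n A"]
      mult_le_mono1[of 2 "M + 1" "pweight n B"] \<open>M \<ge> 1\<close>
    by linarith
  finally have n_le: "n \<le> (M + 1) * (pweight n A + pweight n B + pweight n V)" .
  show ?thesis
  proof (rule ccontr)
    assume "\<not> ?thesis"
    then have "(M + 1) * (pweight n A + pweight n B + pweight n V) \<le> (M + 1) * (2 * M)"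
      using d by (intro mult_le_mono2) linarith
    with n_le n show False
      by (simp add: algebra_simps)
  qed
qed

lemma coprime_of_square_plus_one:
  assumes "int d * int d + 1 = 2 * int n"
  shows "coprime (- int d) (int n)"
proof (rule coprimeI)
  fix c :: int
  assume "c dvd - int d" and "c dvd int n"
  then have "c dvd 2 * int n - int d * int d"
    by (simp add: dvd_diff)
  moreover have "2 * int n - int d * int d = 1"
    using assms by linarith
  ultimately show "is_unit c"
    by simp
qed

text \<open>Since \<open>d\<^sup>2 \<equiv> -1 (mod n)\<close>, the substitution \<open>t = 1 - d s\<close> exchanges the roles of the shifts
  \<open>1\<close> and \<open>d\<close>; this reduces Z-type faults to X-type faults.\<close>

lemma seq_cycle_dual_substitution:
  fixes U V :: "int \<Rightarrow> bit"
  assumes dd: "int d * int d + 1 = 2 * int n" and "periodic n U"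
    and cycle: "seq_cycle (- 1) (- int d) U V"
  shows "seq_cycle (int d) 1 (\<lambda>s. U (- int d * s + 1)) (\<lambda>s. V (- int d * s))"
  unfolding seq_cycle_def
proof
  fix s
  have "U (- int d * (s - int d) + 1) = U (- int d * s)"
    by (rule periodic_eqI[OF \<open>periodic n U\<close>, where k = 2]) (use dd in algebra)
  moreover have "U (- int d * s) + U (- int d * s - - 1) + V (- int d * s) + V (- int d * s - - int d) = 0"
    using cycle unfolding seq_cycle_def by blast
  ultimately show "U (- int d * s + 1) + U (- int d * (s - int d) + 1) + V (- int d * s) + V (- int d * (s - 1)) = 0"
    by (simp add: algebra_simps)
qed

lemma seq_boundary_dual_substitution:
  fixes U V :: "int \<Rightarrow> bit"
  assumes dd: "int d * int d + 1 = 2 * int n" and "periodic n U" and "periodic n V"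
    and "seq_boundary n (int d) 1 (\<lambda>s. U (- int d * s + 1)) (\<lambda>s. V (- int d * s))"
  shows "seq_boundary n (- 1) (- int d) U V"
proof -
  obtain c' where "periodic n c'" and U_c': "\<And>s. U (- int d * s + 1) = c' s + c' (s - 1)"
    and V_c': "\<And>s. V (- int d * s) = c' s + c' (s - int d)"
    using assms(4) unfolding seq_boundary_def by blast
  define c where "c t = c' (int d * t - int d)" for t
  have "periodic n c"
    using periodic_affine[OF \<open>periodic n c'\<close>, of "int d" "- int d"] unfolding c_def[abs_def] by simp
  moreover have "U t = c t + c (t + int d)" for t
  proof -
    have "U t = U (- int d * (int d * t - int d) + 1)"
      by (rule periodic_eqI[OF \<open>periodic n U\<close>, where k = "2 * (t - 1)"]) (use dd in algebra)
    then have "U t = c' (int d * t - int d) + c' (int d * t - int d - 1)"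
      by (simp only: U_c')
    moreover have "c' (int d * t - int d - 1) = c (t + int d)"
      unfolding c_def by (rule periodic_eqI[OF \<open>periodic n c'\<close>, where k = "- 2"]) (use dd in algebra)
    ultimately show ?thesis
      unfolding c_def[of t] by simp
  qed
  moreover have "V t = c t + c (t + 1)" for t
  proof -
    have "V t = V (- int d * (int d * t))"
      by (rule periodic_eqI[OF \<open>periodic n V\<close>, where k = "2 * t"]) (use dd in algebra)
    also have "\<dots> = c' (int d * t) + c' (int d * t - int d)"
      by (simp only: V_c')
    finally show ?thesis
      by (simp add: c_def algebra_simps)
  qed
  ultimately show ?thesis
    unfolding seq_boundary_def by auto
qed

lemma nonboundary_weight_bound_dual:
  fixes A B V :: "int \<Rightarrow> bit" and d n M :: nat
  defines "U \<equiv> \<lambda>t. A t + B t + B (t + int d)"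
  assumes d: "d = 2 * M + 1" and n: "n = 2 * M * M + 2 * M + 1" and "M \<ge> 1"
    and periodic: "periodic n A" "periodic n B" "periodic n V"
    and cycle: "seq_cycle (- 1) (- int d) U V" and nonboundary: "\<not> seq_boundary n (- 1) (- int d) U V"
  shows "d \<le> pweight n A + pweight n B + pweight n V"
proof -
  have dd: "int d * int d + 1 = 2 * int n"
    using d n by (simp add: algebra_simps)
  have "periodic n U"
    using periodic_shift[OF periodic(2), of "- int d"] periodic by (simp add: periodic_def U_def)
  define A' where "A' s = A (- int d * s + 1)" for s
  define B' where "B' s = B (- int d * s + 1)" for s
  define V' where "V' s = V (- int d * s + 0)" for s
  have U': "(\<lambda>s. U (- int d * s + 1)) = (\<lambda>s. A' s + B' s + B' (s - 1))"
    by (simp add: U_def A'_def B'_def algebra_simps)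
  have V': "(\<lambda>s. V (- int d * s)) = V'"
    by (simp add: V'_def fun_eq_iff)
  have "seq_cycle (int d) 1 (\<lambda>s. A' s + B' s + B' (s - 1)) V'"
    using seq_cycle_dual_substitution[OF dd \<open>periodic n U\<close> cycle] unfolding U' V' .
  moreover have "\<not> seq_boundary n (int d) 1 (\<lambda>s. A' s + B' s + B' (s - 1)) V'"
    using seq_boundary_dual_substitution[OF dd \<open>periodic n U\<close> periodic(3)] nonboundary
    unfolding U' V' by blast
  moreover have "periodic n A'" "periodic n B'" "periodic n V'"
    unfolding A'_def[abs_def] B'_def[abs_def] V'_def[abs_def] by (intro periodic_affine periodic)+
  ultimately have "d \<le> pweight n A' + pweight n B' + pweight n V'"
    using nonboundary_weight_bound[OF d n \<open>M \<ge> 1\<close>] by blast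
  moreover have "pweight n A' = pweight n A" "pweight n B' = pweight n B" "pweight n V' = pweight n V"
    unfolding A'_def[abs_def] B'_def[abs_def] V'_def[abs_def]
    by (intro pweight_affine[OF coprime_of_square_plus_one[OF dd]] periodic)+
  ultimately show ?thesis
    by simp
qed

section \<open>The ring R_n as periodic sequences\<close>

lemma bit_poly_minus_eq_add: "(p::bit poly) - q = p + q"
  by (rule poly_eqI) simp

lemma bit_poly_add_self: "(p::bit poly) + p = 0"
  by (rule poly_eqI) (simp only: coeff_add coeff_0 bit_add_self)

lemma bit_poly_two [simp]: "(2::bit poly) = 0"
  using bit_poly_add_self[of 1] by (simp only: one_add_one)

lemma cyc_mod_eq: "cyc_mod n = monom 1 n + 1"
  by (simp add: cyc_mod_def bit_poly_minus_eq_add)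

lemma degree_cyc_mod: "n > 0 \<Longrightarrow> degree (cyc_mod n) = n"
  unfolding cyc_mod_eq by (subst degree_add_eq_left) (simp_all add: degree_monom_eq)

lemma mem_Rn_iff:
  assumes "n > 0"
  shows "p \<in> Rn n \<longleftrightarrow> (\<forall>i\<ge>n. coeff p i = 0)"
proof
  assume "p \<in> Rn n"
  then have p: "p mod cyc_mod n = p"
    by (simp add: Rn_def)
  show "\<forall>i\<ge>n. coeff p i = 0"
  proof (cases "p = 0")
    case False
    then have "degree p < n"
      using degree_mod_less[of "cyc_mod n" p] p degree_cyc_mod[OF assms] assms by fastforce
    then show ?thesis
      by (auto intro: coeff_eq_0)
  qed simp
next
  assume "\<forall>i\<ge>n. coeff p i = 0"
  then have "degree p < degree (cyc_mod n)"
    using assms degree_le[of "n - 1" p] degree_cyc_mod[OF assms] by fastforce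
  then show "p \<in> Rn n"
    by (simp add: Rn_def mod_poly_less)
qed

lemma mod_cyc_mod_Rn: "p mod cyc_mod n \<in> Rn n"
  by (simp add: Rn_def)

lemma rmul_Rn: "rmul n p q \<in> Rn n"
  unfolding rmul_def by (rule mod_cyc_mod_Rn)

lemma radd_Rn: "radd n p q \<in> Rn n"
  unfolding radd_def by (rule mod_cyc_mod_Rn)

lemma radd_eq_add: "p \<in> Rn n \<Longrightarrow> q \<in> Rn n \<Longrightarrow> radd n p q = p + q"
  by (simp add: radd_def Rn_def poly_mod_add_left)

lemma xpow_eq_monom: "k < n \<Longrightarrow> xpow n k = monom 1 k"
  by (simp add: xpow_def)

lemma cyc_mod_dvd_monom_diff: "cyc_mod n dvd monom a m - monom a (m mod n)"
proof -
  have "monom a m - monom a (m mod n) = monom a (m mod n) * ((monom 1 n) ^ (m div n) - 1)"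
    by (simp add: right_diff_distrib mult_monom monom_power add.commute[of "m mod n"])
  also have "\<dots> = monom a (m mod n) * (\<Sum>i<m div n. monom 1 n ^ i) * cyc_mod n"
    by (simp add: power_diff_1_eq cyc_mod_def)
  finally show ?thesis
    by simp
qed

definition cyc_seq :: "nat \<Rightarrow> bit poly \<Rightarrow> int \<Rightarrow> bit" where
  "cyc_seq n p t = coeff p (nat (t mod int n))"

definition cyc_poly :: "nat \<Rightarrow> (int \<Rightarrow> bit) \<Rightarrow> bit poly" where
  "cyc_poly n c = (\<Sum>i<n. monom (c (int i)) i)"

lemma periodic_cyc_seq: "periodic n (cyc_seq n p)"
  by (simp add: periodic_def cyc_seq_def)

lemma cyc_seq_add: "cyc_seq n (p + q) t = cyc_seq n p t + cyc_seq n q t"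
  by (simp add: cyc_seq_def)

lemma coeff_cyc_poly: "coeff (cyc_poly n c) i = (if i < n then c (int i) else 0)"
  by (simp add: cyc_poly_def coeff_sum coeff_monom)

lemma cyc_poly_Rn: "n > 0 \<Longrightarrow> cyc_poly n c \<in> Rn n"
  by (simp add: mem_Rn_iff coeff_cyc_poly)

lemma cyc_seq_cyc_poly: "n > 0 \<Longrightarrow> periodic n c \<Longrightarrow> cyc_seq n (cyc_poly n c) = c"
  by (rule ext) (simp add: cyc_seq_def coeff_cyc_poly nat_less_iff periodic_mod)

lemma cyc_poly_cyc_seq: "n > 0 \<Longrightarrow> p \<in> Rn n \<Longrightarrow> cyc_poly n (cyc_seq n p) = p"
  by (rule poly_eqI) (auto simp: coeff_cyc_poly cyc_seq_def mem_Rn_iff)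

lemma cyc_seq_inject:
  "n > 0 \<Longrightarrow> p \<in> Rn n \<Longrightarrow> q \<in> Rn n \<Longrightarrow> cyc_seq n p = cyc_seq n q \<Longrightarrow> p = q"
  by (metis cyc_poly_cyc_seq)

lemma pweight_cyc_seq:
  assumes "n > 0" and "p \<in> Rn n"
  shows "pweight n (cyc_seq n p) = wt p"
proof -
  have "coeff p i \<noteq> 0 \<Longrightarrow> i < n" for i
    using assms by (auto simp: mem_Rn_iff not_less[symmetric])
  then have "{s. s < n \<and> cyc_seq n p (int s) \<noteq> 0} = {i. coeff p i \<noteq> 0}"
    by (auto simp: cyc_seq_def)
  then show ?thesis
    by (simp add: pweight_def wt_def)
qed

lemma mult_monom_mod_cyc_mod:
  assumes "n > 0" and "p \<in> Rn n"
  shows "(p * monom 1 k) mod cyc_mod n = cyc_poly n (\<lambda>t. cyc_seq n p (t - int k))"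
proof -
  define c where "c = cyc_seq n p"
  define R where "R = cyc_poly n (\<lambda>t. c (t - int k))"
  define g where "g t = monom (c (t - int k)) (nat (t mod int n))" for t
  have "periodic n g"
    using periodic_shift[OF periodic_cyc_seq, of n p "int k"] by (simp add: periodic_def g_def c_def)
  have "R = (\<Sum>i<n. g (int i))"
    by (simp add: R_def cyc_poly_def g_def)
  also have "\<dots> = (\<Sum>i<n. g (int i + int k))"
    by (rule periodic_sum_shift[OF \<open>periodic n g\<close>, symmetric])
  also have "\<dots> = (\<Sum>i<n. monom (c (int i)) ((i + k) mod n))"
  proof (intro sum.cong refl)
    fix i
    have "(int i + int k) mod int n = int ((i + k) mod n)"
      by (simp add: zmod_int)
    then show "g (int i + int k) = monom (c (int i)) ((i + k) mod n)"
      by (simp add: g_def)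
  qed
  finally have R: "R = (\<Sum>i<n. monom (c (int i)) ((i + k) mod n))" .
  have "p * monom 1 k = cyc_poly n c * monom 1 k"
    using cyc_poly_cyc_seq[OF assms] by (simp add: c_def)
  also have "\<dots> = (\<Sum>i<n. monom (c (int i)) (i + k))"
    by (simp add: cyc_poly_def sum_distrib_right mult_monom)
  finally have "p * monom 1 k - R = (\<Sum>i<n. monom (c (int i)) (i + k) - monom (c (int i)) ((i + k) mod n))"
    by (simp add: R sum_subtractf)
  then have "cyc_mod n dvd p * monom 1 k - R"
    by (simp add: dvd_sum cyc_mod_dvd_monom_diff)
  then have "(p * monom 1 k) mod cyc_mod n = R mod cyc_mod n"
    by (simp add: mod_eq_dvd_iff)
  also have "\<dots> = R"
    using cyc_poly_Rn[OF assms(1)] by (simp add: R_def Rn_def)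
  finally show ?thesis
    by (simp add: R_def c_def)
qed

lemma cyc_seq_rmul_one_plus_monom:
  assumes "n > 0" and "p \<in> Rn n"
  shows "cyc_seq n (rmul n p (1 + monom 1 k)) t = cyc_seq n p t + cyc_seq n p (t - int k)"
proof -
  have "rmul n p (1 + monom 1 k) = p + (p * monom 1 k) mod cyc_mod n"
    using assms(2) by (simp add: rmul_def Rn_def distrib_left poly_mod_add_left)
  then show ?thesis
    by (simp add: cyc_seq_add mult_monom_mod_cyc_mod[OF assms] cyc_seq_cyc_poly[OF assms(1)]
        periodic_shift[OF periodic_cyc_seq])
qed

lemma cyc_seq_hook:
  assumes "n > 0" and "u \<in> Rn n" and "j \<in> Rn n"
  shows "cyc_seq n (radd n u (rmul n j (1 + monom 1 b)))
    = (\<lambda>t. cyc_seq n u t + cyc_seq n j t + cyc_seq n j (t - int b))"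
  using assms by (simp add: fun_eq_iff radd_eq_add rmul_Rn cyc_seq_add cyc_seq_rmul_one_plus_monom add.assoc)

lemma seq_cycle_cyc_seq:
  assumes "n > 0" and "u \<in> Rn n" and "v \<in> Rn n"
    and "radd n (rmul n u (1 + monom 1 a)) (rmul n v (1 + monom 1 b)) = 0"
  shows "seq_cycle (int a) (int b) (cyc_seq n u) (cyc_seq n v)"
  unfolding seq_cycle_def
proof
  fix t
  have "cyc_seq n (radd n (rmul n u (1 + monom 1 a)) (rmul n v (1 + monom 1 b))) t = 0"
    using assms(4) by (simp add: cyc_seq_def)
  then show "cyc_seq n u t + cyc_seq n u (t - int a) + cyc_seq n v t + cyc_seq n v (t - int b) = 0"
    using assms(1-3) by (simp add: radd_eq_add rmul_Rn cyc_seq_add cyc_seq_rmul_one_plus_monom add.assoc)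
qed

lemma rmul_cyc_poly_eqI:
  assumes "n > 0" and "periodic n c" and "p \<in> Rn n" and "\<And>t. cyc_seq n p t = c t + c (t - int k)"
  shows "rmul n (cyc_poly n c) (1 + monom 1 k) = p"
proof (rule cyc_seq_inject[OF assms(1) rmul_Rn assms(3)])
  show "cyc_seq n (rmul n (cyc_poly n c) (1 + monom 1 k)) = cyc_seq n p"
    using assms by (simp add: fun_eq_iff cyc_seq_rmul_one_plus_monom cyc_poly_Rn cyc_seq_cyc_poly)
qed

lemma seq_boundary_cyc_seqD:
  assumes "n > 0" and "u \<in> Rn n" and "v \<in> Rn n"
    and "seq_boundary n (int a) (int b) (cyc_seq n u) (cyc_seq n v)"
  shows "\<exists>c\<in>Rn n. u = rmul n c (1 + monom 1 b) \<and> v = rmul n c (1 + monom 1 a)"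
proof -
  obtain c where c: "periodic n c" and "\<And>t. cyc_seq n u t = c t + c (t - int b)"
    and "\<And>t. cyc_seq n v t = c t + c (t - int a)"
    using assms(4) unfolding seq_boundary_def by blast
  then have "u = rmul n (cyc_poly n c) (1 + monom 1 b)" and "v = rmul n (cyc_poly n c) (1 + monom 1 a)"
    using rmul_cyc_poly_eqI[OF assms(1) c] assms(2,3) by simp_all
  with cyc_poly_Rn[OF assms(1)] show ?thesis
    by blast
qed

section \<open>The effective distance\<close>

lemma logical_fault_seq:
  fixes n a b :: nat and j u v :: "bit poly"
  defines "U \<equiv> \<lambda>t. cyc_seq n u t + cyc_seq n j t + cyc_seq n j (t - int b)"
    and "w \<equiv> radd n u (rmul n j (1 + monom 1 b))"
  assumes "n > 0" and "j \<in> Rn n" and "u \<in> Rn n" and "v \<in> Rn n"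
    and cycle: "radd n (rmul n w (1 + monom 1 a)) (rmul n v (1 + monom 1 b)) = 0"
    and not_boundary: "\<not> (\<exists>c\<in>Rn n. w = rmul n c (1 + monom 1 b) \<and> v = rmul n c (1 + monom 1 a))"
  shows "seq_cycle (int a) (int b) U (cyc_seq n v)" and "\<not> seq_boundary n (int a) (int b) U (cyc_seq n v)"
proof -
  have "w \<in> Rn n"
    by (simp add: w_def radd_Rn)
  have "cyc_seq n w = U"
    unfolding w_def U_def by (rule cyc_seq_hook[OF assms(3) assms(5) assms(4)])
  then show "seq_cycle (int a) (int b) U (cyc_seq n v)" and "\<not> seq_boundary n (int a) (int b) U (cyc_seq n v)"
    using seq_cycle_cyc_seq[OF \<open>n > 0\<close> \<open>w \<in> Rn n\<close> \<open>v \<in> Rn n\<close> cycle]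
      seq_boundary_cyc_seqD[OF \<open>n > 0\<close> \<open>w \<in> Rn n\<close> \<open>v \<in> Rn n\<close>] not_boundary
    by auto
qed

lemma weight_bound_X:
  assumes d: "d = 2 * M + 1" and n: "n = 2 * M * M + 2 * M + 1" and "M \<ge> 1"
    and "j \<in> Rn n" and "u \<in> Rn n" and "v \<in> Rn n"
    and logical: "(radd n u (rmul n j (1 + xpow n 1)), v) \<in> C1 n d - C2 n d"
  shows "d \<le> wt j + wt u + wt v"
proof -
  have "n > 0" and xpow: "xpow n 1 = monom 1 1" "xpow n d = monom 1 d"
    using d n \<open>M \<ge> 1\<close> by (simp_all add: xpow_eq_monom algebra_simps)
  from logical
  have "radd n (rmul n (radd n u (rmul n j (1 + monom 1 1))) (1 + monom 1 d)) (rmul n v (1 + monom 1 1)) = 0"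
    and "\<not> (\<exists>c\<in>Rn n. radd n u (rmul n j (1 + monom 1 1)) = rmul n c (1 + monom 1 1)
      \<and> v = rmul n c (1 + monom 1 d))"
    unfolding C1_def C2_def xpow by auto
  from logical_fault_seq[OF \<open>n > 0\<close> assms(4-6) this]
  have "d \<le> pweight n (cyc_seq n u) + pweight n (cyc_seq n j) + pweight n (cyc_seq n v)"
    by (intro nonboundary_weight_bound[OF d n \<open>M \<ge> 1\<close> periodic_cyc_seq periodic_cyc_seq periodic_cyc_seq])
      simp_all
  with assms(4-6) \<open>n > 0\<close> show ?thesis
    by (simp add: pweight_cyc_seq)
qed

lemma weight_bound_Z:
  assumes d: "d = 2 * M + 1" and n: "n = 2 * M * M + 2 * M + 1" and "M \<ge> 1"
    and "j \<in> Rn n" and "u \<in> Rn n" and "v \<in> Rn n"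
    and logical: "(radd n u (rmul n j (1 + xpow n (n - d mod n))), v) \<in> C1' n d - C2' n d"
  shows "d \<le> wt j + wt u + wt v"
proof -
  have "n > 0" and "1 < n" and "d < n"
    using d n \<open>M \<ge> 1\<close> by (simp_all add: algebra_simps)
  then have xpow: "xpow n (n - d mod n) = monom 1 (n - d)" "xpow n (n - 1 mod n) = monom 1 (n - 1)"
    using d by (simp_all add: xpow_eq_monom)
  have "int (n - 1) = - 1 + int n" and "int (n - d) = - int d + int n"
    using \<open>n > 0\<close> \<open>d < n\<close> by simp_all
  then have shifts: "int (n - 1) mod int n = - 1 mod int n" "int (n - d) mod int n = - int d mod int n"
    by (simp_all only: mod_add_self2)
  have hook: "cyc_seq n j (t - int (n - d)) = cyc_seq n j (t + int d)" for t
    by (rule periodic_eqI[OF periodic_cyc_seq, where k = "- 1"]) (use \<open>d < n\<close> in simp)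
  from logical
  have "radd n (rmul n (radd n u (rmul n j (1 + monom 1 (n - d)))) (1 + monom 1 (n - 1)))
      (rmul n v (1 + monom 1 (n - d))) = 0"
    and "\<not> (\<exists>c\<in>Rn n. radd n u (rmul n j (1 + monom 1 (n - d))) = rmul n c (1 + monom 1 (n - d))
      \<and> v = rmul n c (1 + monom 1 (n - 1)))"
    unfolding C1'_def C2'_def xpow by auto
  note seq = logical_fault_seq[OF \<open>n > 0\<close> assms(4-6) this, unfolded hook]
  define U where "U t = cyc_seq n u t + cyc_seq n j t + cyc_seq n j (t + int d)" for t
  have "periodic n (\<lambda>t. cyc_seq n j (t + int d))"
    using periodic_shift[OF periodic_cyc_seq, of n j "- int d"] by simp
  then have "periodic n U"
    unfolding U_def[abs_def] by (intro periodic_add periodic_cyc_seq)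
  have "seq_cycle (- 1) (- int d) U (cyc_seq n v)"
    using seq(1) seq_cycle_cong[OF \<open>periodic n U\<close> periodic_cyc_seq shifts] by (simp add: U_def[abs_def])
  moreover have "\<not> seq_boundary n (- 1) (- int d) U (cyc_seq n v)"
    using seq(2) seq_boundary_cong[OF shifts] by (simp add: U_def[abs_def])
  ultimately have "d \<le> pweight n (cyc_seq n u) + pweight n (cyc_seq n j) + pweight n (cyc_seq n v)"
    unfolding U_def[abs_def]
    by (intro nonboundary_weight_bound_dual[OF d n \<open>M \<ge> 1\<close> periodic_cyc_seq periodic_cyc_seq periodic_cyc_seq])
  with assms(4-6) \<open>n > 0\<close> show ?thesis
    by (simp add: pweight_cyc_seq)
qed

lemma bad_fault_weight_bound:
  assumes "d = 2 * M + 1" and "n = 2 * M * M + 2 * M + 1" and "M \<ge> 1" and "bad_fault n d j u v"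
  shows "d \<le> wt j + wt u + wt v"
  using assms weight_bound_X[OF assms(1-3)] weight_bound_Z[OF assms(1-3)]
  unfolding bad_fault_def by blast

lemma sum_monom_mult_one_plus_monom:
  "(\<Sum>m<K. monom (1::bit) (a + m * e)) * (1 + monom 1 e) = monom 1 a + monom 1 (a + K * e)"
proof -
  have "monom (1::bit) (a + m * e) * (1 + monom 1 e) = monom 1 (a + Suc m * e) - monom 1 (a + m * e)" for m
    by (simp add: distrib_left mult_monom bit_poly_minus_eq_add algebra_simps)
  then have "(\<Sum>m<K. monom (1::bit) (a + m * e)) * (1 + monom 1 e)
      = (\<Sum>m<K. monom 1 (a + Suc m * e) - monom 1 (a + m * e))"
    by (simp add: sum_distrib_right)
  also have "\<dots> = monom 1 (a + K * e) - monom 1 a"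
    using sum_lessThan_telescope[of "\<lambda>m. monom (1::bit) (a + m * e)" K] by simp
  finally show ?thesis
    by (simp add: bit_poly_minus_eq_add add.commute)
qed

lemma coeff_sum_monom_inj:
  fixes h :: "nat \<Rightarrow> nat"
  assumes "inj_on h {..<K}"
  shows "coeff (\<Sum>k<K. monom (1::bit) (h k)) i = of_bool (i \<in> h ` {..<K})"
proof -
  have "(\<Sum>k<K. monom (1::bit) (h k)) = (\<Sum>j\<in>h ` {..<K}. monom 1 j)"
    by (simp add: sum.reindex[OF assms])
  then have "coeff (\<Sum>k<K. monom (1::bit) (h k)) i = (\<Sum>j\<in>h ` {..<K}. if j = i then 1 else 0)"
    by (simp add: coeff_sum coeff_monom)
  also have "\<dots> = (if i \<in> h ` {..<K} then 1 else 0)"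
    by (rule sum.delta) simp
  finally show ?thesis
    by simp
qed

lemma wt_sum_monom_inj:
  fixes h :: "nat \<Rightarrow> nat"
  shows "inj_on h {..<K} \<Longrightarrow> wt (\<Sum>k<K. monom (1::bit) (h k)) = K"
  by (simp add: wt_def coeff_sum_monom_inj card_image)

lemma sum_monom_Rn:
  fixes h :: "nat \<Rightarrow> nat"
  assumes "n > 0" and "\<And>k. k < K \<Longrightarrow> h k < n"
  shows "(\<Sum>k<K. monom (1::bit) (h k)) \<in> Rn n"
  unfolding mem_Rn_iff[OF assms(1)]
proof (intro allI impI)
  fix i
  assume "n \<le> i"
  then have "h k \<noteq> i" if "k < K" for k
    using assms(2)[OF that] by simp
  then show "coeff (\<Sum>k<K. monom (1::bit) (h k)) i = 0"
    by (simp add: coeff_sum coeff_monom)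
qed

lemma poly_one_mod_cyc_mod: "poly (p mod cyc_mod n) 1 = poly p 1"
proof -
  have "poly (cyc_mod n) 1 = 0"
    by (simp add: cyc_mod_def poly_monom)
  then show ?thesis
    using div_mult_mod_eq[of p "cyc_mod n"] by (metis add_0 mult_zero_right poly_add poly_mult)
qed

lemma poly_one_rmul_one_plus_monom: "poly (rmul n c (1 + monom 1 k)) 1 = 0"
  by (simp add: rmul_def poly_one_mod_cyc_mod poly_monom)

text \<open>The minimum-weight logical error: \<open>M\<close> data errors \<open>x\<^sup>m\<^sup>d\<close> on the left and the \<open>M + 1\<close>
  consecutive errors \<open>x\<^sup>M\<^sup>d\<^sup>+\<^sup>k\<close> on the right. Their syndromes telescope to \<open>1 + x\<^sup>n = 0\<close>, and they are
  not a stabilizer since every element of \<open>C2\<close> vanishes at \<open>x = 1\<close> while \<open>M\<close> or \<open>M + 1\<close> is odd.\<close>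

definition witness_left :: "nat \<Rightarrow> nat \<Rightarrow> bit poly" where
  "witness_left M d = (\<Sum>m<M. monom 1 (m * d))"

definition witness_right :: "nat \<Rightarrow> nat \<Rightarrow> bit poly" where
  "witness_right M d = (\<Sum>k<M + 1. monom 1 (M * d + k))"

lemma wt_witness:
  assumes "d > 0"
  shows "wt (witness_left M d) = M" and "wt (witness_right M d) = M + 1"
proof -
  show "wt (witness_left M d) = M"
    unfolding witness_left_def using assms by (intro wt_sum_monom_inj inj_onI) simp
  show "wt (witness_right M d) = M + 1"
    unfolding witness_right_def by (intro wt_sum_monom_inj inj_onI) simp
qed

lemma witness_Rn:
  assumes "M * d + (M + 1) = n"
  shows "witness_left M d \<in> Rn n" and "witness_right M d \<in> Rn n"
proof -
  have "m * d < n" if "m < M" for m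
    using that assms mult_le_mono1[of m M d] by linarith
  moreover have "n > 0"
    using assms by linarith
  ultimately show "witness_left M d \<in> Rn n" and "witness_right M d \<in> Rn n"
    unfolding witness_left_def witness_right_def using assms by (intro sum_monom_Rn; simp)+
qed

lemma witness_logical_X:
  assumes "d = 2 * M + 1" and "n = 2 * M * M + 2 * M + 1" and "M \<ge> 1"
  shows "(witness_left M d, witness_right M d) \<in> C1 n d - C2 n d"
proof -
  have n_eq: "M * d + (M + 1) = n"
    using assms by (simp add: algebra_simps)
  have xpow: "xpow n 1 = monom 1 1" "xpow n d = monom 1 d"
    using assms by (simp_all add: xpow_eq_monom algebra_simps)
  have "witness_left M d * (1 + monom 1 d) = 1 + monom 1 (M * d)"
    using sum_monom_mult_one_plus_monom[where K = M and a = 0 and e = d] by (simp add: witness_left_def)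
  moreover have "witness_right M d * (1 + monom 1 1) = monom 1 (M * d) + monom 1 n"
    using sum_monom_mult_one_plus_monom[where K = "M + 1" and a = "M * d" and e = 1] n_eq by (simp add: witness_right_def)
  ultimately have "witness_left M d * (1 + monom 1 d) + witness_right M d * (1 + monom 1 1) = cyc_mod n"
    by (simp add: cyc_mod_eq algebra_simps)
  then have "radd n (rmul n (witness_left M d) (1 + monom 1 d)) (rmul n (witness_right M d) (1 + monom 1 1)) = 0"
    by (simp add: radd_def rmul_def mod_add_eq)
  then have "(witness_left M d, witness_right M d) \<in> C1 n d"
    using witness_Rn[OF n_eq] unfolding C1_def xpow by simp
  moreover have "(witness_left M d, witness_right M d) \<notin> C2 n d"
  proof
    assume "(witness_left M d, witness_right M d) \<in> C2 n d"
    then have "poly (witness_left M d) 1 = 0" and "poly (witness_right M d) 1 = 0"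
      unfolding C2_def xpow by (auto simp: poly_one_rmul_one_plus_monom)
    moreover have "poly (witness_left M d) 1 = of_nat M" and "poly (witness_right M d) 1 = of_nat (M + 1)"
      by (simp_all add: witness_left_def witness_right_def poly_sum poly_monom)
    ultimately show False
      by simp
  qed
  ultimately show ?thesis
    by simp
qed

lemma bad_fault_witness:
  assumes "d = 2 * M + 1" and "n = 2 * M * M + 2 * M + 1" and "M \<ge> 1"
  shows "bad_fault n d 0 (witness_left M d) (witness_right M d)"
proof -
  have "M * d + (M + 1) = n"
    using assms by (simp add: algebra_simps)
  note Rn = witness_Rn[OF this]
  have "0 \<in> Rn n"
    by (simp add: Rn_def)
  then have "radd n (witness_left M d) (rmul n 0 (1 + xpow n 1)) = witness_left M d"
    using Rn by (simp add: rmul_def radd_eq_add)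
  with witness_logical_X[OF assms] Rn \<open>0 \<in> Rn n\<close> show ?thesis
    by (simp add: bad_fault_def)
qed

theorem theorem7:
  fixes d n :: nat
  assumes "d \<ge> 3" and "odd d" and "n = (d^2 + 1) div 2"
  shows "eff_dist n d = d"
proof -
  define M where "M = d div 2"
  have d: "d = 2 * M + 1" and "M \<ge> 1"
    using assms(1,2) by (simp_all add: M_def)
  have "d^2 + 1 = 2 * (2 * M * M + 2 * M + 1)"
    unfolding d by (simp add: power2_eq_square algebra_simps)
  then have n: "n = 2 * M * M + 2 * M + 1"
    using assms(3) by simp
  have "wt 0 = 0"
    by (simp add: wt_def)
  with d have "wt 0 + wt (witness_left M d) + wt (witness_right M d) = d"
    using wt_witness[of d M] by simp
  then have "d \<in> {wt j + wt u + wt v | j u v. bad_fault n d j u v}"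
    using bad_fault_witness[OF d n \<open>M \<ge> 1\<close>] by force
  moreover have "d \<le> w" if "w \<in> {wt j + wt u + wt v | j u v. bad_fault n d j u v}" for w
    using that bad_fault_weight_bound[OF d n \<open>M \<ge> 1\<close>] by blast
  ultimately show ?thesis
    unfolding eff_dist_def by (rule cInf_eq_minimum)
qed

end
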